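(* Let $\delta,\gamma\in\mathbb R$. For any pair of points $(\xi,\eta),(z_1,z_2)\in(0,\infty)\times\mathbb R$ there exists a smooth control $u:[0,1]\to\mathbb R$ such that the system \[ \tfrac{d}{dt}z_1(t)=-z_1(t)^4z_2(t),\qquad \tfrac{d}{dt}z_2(t)=\delta z_1(t)+2z_1(t)^3z_2(t)^2-\gamma z_1(t)^4z_2(t)+u(t) \] has a solution on $[0,1]$ with $z_1(0)=\xi$, $z_2(0)=\eta$, $z_1(1)=z_1$, $z_2(1)=z_2$ and $z_1(t)>0$ for all $t\in[0,1]$. *)

theory Defs
  imports Complex_Main
begin

definition smooth_on_set :: "(real \<Rightarrow> real) \<Rightarrow> real set \<Rightarrow> bool" where
  "smooth_on_set u S \<longleftrightarrow>
     (\<exists>D :: nat \<Rightarrow> real \<Rightarrow> real. D 0 = u \<and>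
        (\<forall>k. \<forall>t\<in>S. (D k has_real_derivative D (Suc k) t) (at t within S)))"

end

theory Submission
  imports Defs "HOL-Analysis.Derivative"
begin

text \<open>The system is flat with output \<open>ln z1\<close>: writing \<open>z1 = exp p\<close>, the first equation
forces \<open>z2 = - p' exp (-3 p)\<close>, and the second equation then merely defines \<open>u\<close>. So it
suffices to choose \<open>p\<close> with prescribed values and slopes at 0 and 1, which a cubic Hermite
interpolant does. Smoothness of \<open>u\<close> holds because every function built from constants,
the identity, sums, products and \<open>exp\<close> is smooth, its derivative being of the same kind.\<close>

inductive_set exp_poly :: "(real \<Rightarrow> real) set" where
  const: "(\<lambda>t. c) \<in> exp_poly"
| ident: "(\<lambda>t. t) \<in> exp_poly"
| add: "f \<in> exp_poly \<Longrightarrow> g \<in> exp_poly \<Longrightarrow> (\<lambda>t. f t + g t) \<in> exp_poly"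
| mult: "f \<in> exp_poly \<Longrightarrow> g \<in> exp_poly \<Longrightarrow> (\<lambda>t. f t * g t) \<in> exp_poly"
| exp: "f \<in> exp_poly \<Longrightarrow> (\<lambda>t. exp (f t)) \<in> exp_poly"

lemma exp_poly_power:
  assumes "f \<in> exp_poly"
  shows "(\<lambda>t. f t ^ n) \<in> exp_poly"
proof (induction n)
  case 0
  show ?case using exp_poly.const[of 1] by simp
next
  case (Suc n)
  show ?case using exp_poly.mult[OF assms Suc.IH] by simp
qed

lemma exp_poly_uminus: "f \<in> exp_poly \<Longrightarrow> (\<lambda>t. - f t) \<in> exp_poly"
  using exp_poly.mult[OF exp_poly.const[of "-1"]] by simp

lemma exp_poly_diff: "f \<in> exp_poly \<Longrightarrow> g \<in> exp_poly \<Longrightarrow> (\<lambda>t. f t - g t) \<in> exp_poly"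
  using exp_poly.add[OF _ exp_poly_uminus, of f g] by simp

lemma deriv_eqI:
  assumes "\<And>t. (f has_real_derivative g t) (at t)"
  shows "deriv f = g"
  using assms DERIV_imp_deriv by blast

lemma exp_poly_deriv:
  assumes "f \<in> exp_poly"
  shows "deriv f \<in> exp_poly \<and> (\<forall>t. (f has_real_derivative deriv f t) (at t))"
  using assms
proof (induction rule: exp_poly.induct)
  case (const c)
  have "deriv (\<lambda>t. c) = (\<lambda>t. 0)" by (intro deriv_eqI DERIV_const)
  then show ?case using exp_poly.const by auto
next
  case ident
  have "deriv (\<lambda>t::real. t) = (\<lambda>t. 1)" by (rule deriv_eqI) simp
  then show ?case using exp_poly.const by auto
next
  case (add f g)
  have "deriv (\<lambda>t. f t + g t) = (\<lambda>t. deriv f t + deriv g t)"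
    using add.IH by (intro deriv_eqI DERIV_add) auto
  then show ?case using add.IH by (auto intro: exp_poly.add DERIV_add)
next
  case (mult f g)
  have "deriv (\<lambda>t. f t * g t) = (\<lambda>t. f t * deriv g t + deriv f t * g t)"
    using mult.IH by (intro deriv_eqI DERIV_mult') auto
  then show ?case
    using mult by (auto intro: exp_poly.add exp_poly.mult DERIV_mult')
next
  case (exp f)
  have "deriv (\<lambda>t. exp (f t)) = (\<lambda>t. exp (f t) * deriv f t)"
    using exp.IH by (intro deriv_eqI DERIV_fun_exp) auto
  then show ?case
    using exp by (auto intro: exp_poly.exp exp_poly.mult DERIV_fun_exp)
qed

lemma smooth_on_set_exp_poly:
  assumes "f \<in> exp_poly"
  shows "smooth_on_set f S"
proof -
  have D: "(deriv ^^ k) f \<in> exp_poly" for k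
    by (induction k) (use assms exp_poly_deriv in auto)
  have "((deriv ^^ k) f has_real_derivative (deriv ^^ Suc k) f t) (at t within S)" for k t
    using exp_poly_deriv[OF D[of k]] by (auto intro: has_field_derivative_at_within)
  then show ?thesis
    unfolding smooth_on_set_def by (intro exI[of _ "\<lambda>k. (deriv ^^ k) f"]) auto
qed

definition hermite_cubic :: "real \<Rightarrow> real \<Rightarrow> real \<Rightarrow> real \<Rightarrow> real \<Rightarrow> real" where
  "hermite_cubic p0 q0 p1 q1 t =
     p0 + q0 * t + (3 * (p1 - p0) - 2 * q0 - q1) * t ^ 2 + (2 * (p0 - p1) + q0 + q1) * t ^ 3"

lemma hermite_cubic_exp_poly: "hermite_cubic p0 q0 p1 q1 \<in> exp_poly"
  unfolding hermite_cubic_def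
  by (intro exp_poly.add exp_poly.mult exp_poly.const exp_poly.ident exp_poly_power)

lemma hermite_cubic_has_derivative:
  "(hermite_cubic p0 q0 p1 q1 has_real_derivative
      q0 + 2 * (3 * (p1 - p0) - 2 * q0 - q1) * t + 3 * (2 * (p0 - p1) + q0 + q1) * t ^ 2) (at t)"
  unfolding hermite_cubic_def[abs_def] by (auto intro!: derivative_eq_intros simp: algebra_simps)

lemma hermite_cubic_endpoints:
  "hermite_cubic p0 q0 p1 q1 0 = p0" "hermite_cubic p0 q0 p1 q1 1 = p1"
  "deriv (hermite_cubic p0 q0 p1 q1) 0 = q0" "deriv (hermite_cubic p0 q0 p1 q1) 1 = q1"
  using deriv_eqI[OF hermite_cubic_has_derivative, of p0 q0 p1 q1]
  by (auto simp: hermite_cubic_def algebra_simps)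

lemma flat_output_has_derivative:
  assumes "(p has_real_derivative p') (at t)"
  shows "((\<lambda>s. exp (p s)) has_real_derivative
            - (exp (p t) ^ 4 * (- p' * exp (-3 * p t)))) (at t)"
proof -
  have "exp (p t) ^ 4 * exp (-3 * p t) = exp (p t)"
    by (simp add: exp_of_nat_mult[of 4, symmetric] exp_add[symmetric])
  then show ?thesis
    using assms by (auto intro!: derivative_eq_intros simp: algebra_simps)
qed

lemma flat_output_endpoint:
  fixes x y :: real
  assumes "x > 0"
  shows "x ^ 3 * y * exp (-3 * ln x) = y"
proof -
  have "exp (3 * ln x) = x ^ 3"
    using exp_of_nat_mult[of 3 "ln x"] assms by simp
  then have "exp (-3 * ln x) * x ^ 3 = 1"
    by (metis exp_add exp_zero add.commute add.right_inverse mult_minus_left)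
  then show ?thesis by (simp add: algebra_simps)
qed

theorem lemma4:
  fixes \<delta> \<gamma> \<xi> \<eta> a b :: real
  assumes "\<xi> > 0" and "a > 0"
  shows "\<exists>u :: real \<Rightarrow> real. smooth_on_set u {0..1} \<and>
           (\<exists>z1 z2 :: real \<Rightarrow> real.
              (\<forall>t\<in>{0..1}.
                 (z1 has_real_derivative (- (z1 t ^ 4 * z2 t))) (at t within {0..1}) \<and>
                 (z2 has_real_derivative
                    (\<delta> * z1 t + 2 * z1 t ^ 3 * z2 t ^ 2 - \<gamma> * z1 t ^ 4 * z2 t + u t))
                    (at t within {0..1})) \<and>
              z1 0 = \<xi> \<and> z2 0 = \<eta> \<and> z1 1 = a \<and> z2 1 = b \<and>
              (\<forall>t\<in>{0..1}. z1 t > 0))"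
proof -
  define p where "p = hermite_cubic (ln \<xi>) (- (\<xi> ^ 3 * \<eta>)) (ln a) (- (a ^ 3 * b))"
  define z1 where "z1 = (\<lambda>t. exp (p t))"
  define z2 where "z2 = (\<lambda>t. - deriv p t * exp (-3 * p t))"
  define u where "u = (\<lambda>t. deriv z2 t - (\<delta> * z1 t + 2 * z1 t ^ 3 * z2 t ^ 2 - \<gamma> * z1 t ^ 4 * z2 t))"
  have p: "p \<in> exp_poly" "deriv p \<in> exp_poly" "\<And>t. (p has_real_derivative deriv p t) (at t)"
    using exp_poly_deriv[of p] hermite_cubic_exp_poly by (auto simp: p_def)
  have z1: "z1 \<in> exp_poly" "\<And>t. (z1 has_real_derivative - (z1 t ^ 4 * z2 t)) (at t)"
    unfolding z1_def z2_def using p flat_output_has_derivative by (auto intro: exp_poly.exp)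
  have z2: "z2 \<in> exp_poly"
    unfolding z2_def using p by (intro exp_poly.mult exp_poly.exp exp_poly_uminus exp_poly.const)
  have "u \<in> exp_poly"
    unfolding u_def using z1 z2 exp_poly_deriv[OF z2]
    by (intro exp_poly_diff exp_poly.add exp_poly.mult exp_poly.const exp_poly_power) auto
  moreover have "(z2 has_real_derivative
                   \<delta> * z1 t + 2 * z1 t ^ 3 * z2 t ^ 2 - \<gamma> * z1 t ^ 4 * z2 t + u t) (at t)" for t
    using exp_poly_deriv[OF z2] by (simp add: u_def)
  moreover have "z1 0 = \<xi>" "z1 1 = a" "z2 0 = \<eta>" "z2 1 = b"
    using assms flat_output_endpoint hermite_cubic_endpoints by (auto simp: z1_def z2_def p_def)
  ultimately show ?thesis
    using z1 by (intro exI[of _ u] exI[of _ z1] exI[of _ z2] conjI smooth_on_set_exp_poly)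
      (auto intro: has_field_derivative_at_within simp: z1_def)
qed

end
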